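(* Let $X$ be the Coxeter realization of a building of triangle type $(2,k,m)$ with $k\ge3$ and $m\ge6$. Let $v,v'$ be two vertices of type $\mathbf{k}$ adjacent to a vertex $w$ of type $\mathbf{2}$. Then $w$ is the unique vertex of type $\mathbf 2$ adjacent to both $v$ and $v'$. Moreover, if $v,v'$ are both adjacent to a vertex $u$ of type $\mathbf m$, then $w$ and $u$ are adjacent.
   Context: Buildings have finite thickness; the Coxeter realization is the simplicial complex whose apartments are Coxeter complexes of the triangle group. A vertex is of type $\mathbf{j}$ ($j\in\{2,k,m\}$) if its stabilizer in an apartment is dihedral of order $2j$, equivalently its link is a bipartite graph of girth $2j$; when $k=m$ the two types $\mathbf k$ and $\mathbf m$ are still distinguished (as the two types of vertices of a chamber other than type $\mathbf 2$). *)

theory Defs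
  imports Main
begin

text \<open>Elements are represented by words over {0,1,2}; group equality is the
  congruence generated by the Coxeter relators.\<close>

definition braid :: "nat \<Rightarrow> nat \<Rightarrow> nat \<Rightarrow> nat list" where
  "braid a b n = concat (replicate n [a, b])"

definition relators :: "nat \<Rightarrow> nat \<Rightarrow> nat list set" where
  "relators k m = {[0,0], [1,1], [2,2], braid 0 1 2, braid 1 2 k, braid 0 2 m}"

inductive coxeq :: "nat \<Rightarrow> nat \<Rightarrow> nat list \<Rightarrow> nat list \<Rightarrow> bool" for k m where
  refl: "coxeq k m u u"
| sym: "coxeq k m u v \<Longrightarrow> coxeq k m v u"
| trans: "coxeq k m u v \<Longrightarrow> coxeq k m v w \<Longrightarrow> coxeq k m u w"
| rel: "r \<in> relators k m \<Longrightarrow> coxeq k m (u @ r @ v) (u @ v)"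

definition cox_len :: "nat \<Rightarrow> nat \<Rightarrow> nat list \<Rightarrow> nat" where
  "cox_len k m w = (LEAST n. \<exists>u. set u \<subseteq> {0,1,2} \<and> length u = n \<and> coxeq k m u w)"

text \<open>A building of type (2,k,m) as a W-metric space (Abramenko--Brown, Def. 5.1),
  with chambers of type 'c and Weyl distance delta, required to be thick with
  finite thickness (every panel is finite and contains at least 3 chambers).\<close>
definition building :: "nat \<Rightarrow> nat \<Rightarrow> ('c \<Rightarrow> 'c \<Rightarrow> nat list) \<Rightarrow> bool" where
  "building k m \<delta> \<longleftrightarrow>
     (\<forall>C D. set (\<delta> C D) \<subseteq> {0,1,2}) \<and>
     (\<forall>C D. coxeq k m (\<delta> C D) [] \<longleftrightarrow> C = D) \<and>
     (\<forall>C D C' s. s < 3 \<longrightarrow> coxeq k m (\<delta> C' C) [s] \<longrightarrow>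
        (coxeq k m (\<delta> C' D) (s # \<delta> C D) \<or> coxeq k m (\<delta> C' D) (\<delta> C D)) \<and>
        (cox_len k m (s # \<delta> C D) = cox_len k m (\<delta> C D) + 1 \<longrightarrow>
           coxeq k m (\<delta> C' D) (s # \<delta> C D))) \<and>
     (\<forall>C D s. s < 3 \<longrightarrow>
        (\<exists>C'. coxeq k m (\<delta> C' C) [s] \<and> coxeq k m (\<delta> C' D) (s # \<delta> C D))) \<and>
     (\<forall>C s. s < 3 \<longrightarrow> finite {D. coxeq k m (\<delta> C D) [s]} \<and>
        card {D. coxeq k m (\<delta> C D) [s]} \<ge> 2)"

text \<open>The J-residue of chamber C; vertices of the Coxeter realization are the
  residues of rank 2.  Type 2 = {0,1}, type k = {1,2}, type m = {0,2}.\<close>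
definition residue :: "nat \<Rightarrow> nat \<Rightarrow> ('c \<Rightarrow> 'c \<Rightarrow> nat list) \<Rightarrow> nat set \<Rightarrow> 'c \<Rightarrow> 'c set" where
  "residue k m \<delta> J C = {D. \<exists>u. set u \<subseteq> J \<and> coxeq k m (\<delta> C D) u}"

definition vertex_of_type :: "nat \<Rightarrow> nat \<Rightarrow> ('c \<Rightarrow> 'c \<Rightarrow> nat list) \<Rightarrow> nat set \<Rightarrow> 'c set \<Rightarrow> bool" where
  "vertex_of_type k m \<delta> J x \<longleftrightarrow> (\<exists>C. x = residue k m \<delta> J C)"

abbreviation "type2 \<equiv> {0,1::nat}"
abbreviation "typek \<equiv> {1,2::nat}"
abbreviation "typem \<equiv> {0,2::nat}"

definition adjacent :: "'c set \<Rightarrow> 'c set \<Rightarrow> bool" where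
  "adjacent x y \<longleftrightarrow> x \<noteq> y \<and> x \<inter> y \<noteq> {}"

end

theory Submission
  imports Defs "HOL-Analysis.Product_Vector"
begin

text \<open>Choosing \<open>s0\<close>-adjacent chambers \<open>C \<in> v\<close> and \<open>C' \<in> v'\<close>
  inside \<open>w\<close> turns both claims into word problems in the triangle group \<open>W\<close>: uniqueness of \<open>w\<close>
  amounts to \<open>\<langle>s1, s2\<rangle> \<inter> s0 \<langle>s1, s2\<rangle> s0 = \<langle>s1\<rangle>\<close>, and adjacency of \<open>w\<close> and \<open>u\<close> to the fact that
  \<open>s0 \<langle>s1, s2\<rangle> \<inter> a \<langle>s0, s2\<rangle> \<noteq> {}\<close> with \<open>a \<in> \<langle>s1, s2\<rangle>\<close> forces \<open>a \<in> {1, s1, s2, s1 s2}\<close>.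
  Both are decided in the cosine representation of \<open>W\<close> on \<open>\<real>\<^sup>3\<close>, where \<open>s1 s2\<close> acts by a
  rotation of order exactly \<open>k\<close> and the \<open>y\<close>-rows of elements of \<open>\<langle>s1, s2\<rangle>\<close> satisfy a linear and
  a quadratic invariant.\<close>

section \<open>Words in the triangle group\<close>

declare coxeq.trans [trans]

lemma coxeq_cong: "coxeq k m u v \<Longrightarrow> coxeq k m (p @ u @ q) (p @ v @ q)"
proof (induction rule: coxeq.induct)
  case (rel r u v)
  have "coxeq k m ((p @ u) @ r @ (v @ q)) ((p @ u) @ (v @ q))"
    using rel by (rule coxeq.rel)
  then show ?case by simp
qed (auto intro: coxeq.intros)

lemma coxeq_append: "coxeq k m u u' \<Longrightarrow> coxeq k m v v' \<Longrightarrow> coxeq k m (u @ v) (u' @ v')"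
  using coxeq_cong[of k m u u' "[]" v] coxeq_cong[of k m v v' u' "[]"]
  by (auto intro: coxeq.trans)

lemma coxeq_Cons: "coxeq k m u v \<Longrightarrow> coxeq k m (s # u) (s # v)"
  using coxeq_cong[of k m u v "[s]" "[]"] by simp

lemma coxeq_snoc: "coxeq k m u v \<Longrightarrow> coxeq k m (u @ [s]) (v @ [s])"
  using coxeq_append[OF _ coxeq.refl] .

lemma coxeq_relator: "r \<in> relators k m \<Longrightarrow> coxeq k m r []"
  using coxeq.rel[of r k m "[]" "[]"] by simp

lemma coxeq_cancel_square: "s < 3 \<Longrightarrow> coxeq k m (p @ s # s # q) (p @ q)"
proof -
  assume "s < 3"
  then have "[s, s] \<in> relators k m" by (auto simp: relators_def less_Suc_eq)
  from coxeq.rel[OF this, of p q] show ?thesis by simp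
qed

lemma coxeq_cancel_head: "s < 3 \<Longrightarrow> coxeq k m u (s # v) \<Longrightarrow> coxeq k m (s # u) v"
  using coxeq_Cons[of k m u "s # v" s] coxeq_cancel_square[of s k m "[]" v]
  by (auto intro: coxeq.trans)

lemma braid_0 [simp]: "braid a b 0 = []"
  by (simp add: braid_def)

lemma braid_Suc: "braid a b (Suc n) = a # b # braid a b n"
  by (simp add: braid_def)

lemma braid_Suc_right: "braid a b (Suc n) = braid a b n @ [a, b]"
  by (simp add: braid_def replicate_append_same[symmetric] del: replicate_append_same)

lemma rev_braid: "rev (braid a b n) = braid b a n"
proof (induction n)
  case (Suc n)
  then have "rev (braid a b (Suc n)) = braid b a n @ [b, a]" by (simp add: braid_Suc)
  then show ?case by (simp add: braid_Suc_right)
qed simp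

lemma coxeq_braid_swap:
  assumes "b < 3" "coxeq k m (braid a b n) []"
  shows "coxeq k m (braid b a n) []"
proof -
  have "b # braid a b n = braid b a n @ [b]"
    by (induction n) (simp_all add: braid_Suc)
  then have eq: "b # braid a b n @ [b] = braid b a n @ [b, b]" by simp
  have "coxeq k m (b # braid a b n @ [b]) (braid b a n)"
    unfolding eq using coxeq_cancel_square[OF assms(1), of k m "braid b a n" "[]"] by simp
  moreover have "coxeq k m (b # braid a b n @ [b]) []"
    using coxeq_cong[OF assms(2), where p = "[b]" and q = "[b]"]
      coxeq_cancel_square[OF assms(1), of k m "[]" "[]"]
    by (auto intro: coxeq.trans)
  ultimately show ?thesis by (blast intro: coxeq.trans coxeq.sym)
qed

lemma coxeq_rev_relator: "r \<in> relators k m \<Longrightarrow> coxeq k m (rev r) []"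
  using coxeq_relator[of _ k m] coxeq_braid_swap[of _ k m]
  by (auto simp: relators_def rev_braid)

lemma coxeq_rev: "coxeq k m u v \<Longrightarrow> coxeq k m (rev u) (rev v)"
proof (induction rule: coxeq.induct)
  case (rel r u v)
  show ?case using coxeq_cong[OF coxeq_rev_relator[OF rel], where p = "rev v" and q = "rev u"] by simp
qed (auto intro: coxeq.intros)

lemma coxeq_0101: "coxeq k m [0, 1, 0, 1] []"
  using coxeq_relator[of "braid 0 1 2" k m]
  by (simp add: relators_def braid_def numeral_2_eq_2)

lemma coxeq_10: "coxeq k m [1, 0] [0, 1]"
proof -
  have "coxeq k m [0, 0, 1, 0, 1, 1] [1, 0]"
    using coxeq_cancel_square[of 0 k m "[]" "[1, 0, 1, 1]"] coxeq_cancel_square[of 1 k m "[1, 0]" "[]"]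
    by (auto intro: coxeq.trans)
  moreover have "coxeq k m [0, 0, 1, 0, 1, 1] [0, 1]"
    using coxeq_cong[OF coxeq_0101, where p = "[0]" and q = "[1]"] by simp
  ultimately show ?thesis by (blast intro: coxeq.trans coxeq.sym)
qed

lemma coxeq_010: "coxeq k m [0, 1, 0] [1]"
proof -
  have "coxeq k m [0, 1, 0, 1, 1] [0, 1, 0]"
    using coxeq_cancel_square[of 1 k m "[0, 1, 0]" "[]"] by simp
  moreover have "coxeq k m [0, 1, 0, 1, 1] [1]"
    using coxeq_cong[OF coxeq_0101, where p = "[]" and q = "[1]"] by simp
  ultimately show ?thesis by (blast intro: coxeq.trans coxeq.sym)
qed

lemma type2_normal_forms_snoc:
  assumes "q \<in> {[], [0], [1], [0, 1]}" "s \<in> {0, 1}"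
  shows "\<exists>q' \<in> {[], [0], [1], [0, 1]}. coxeq k m (q @ [s]) q'"
proof -
  have "coxeq k m [0, 0] []" "coxeq k m [1, 1] []" "coxeq k m [0, 1, 1] [0]"
    using coxeq_cancel_square[of 0 k m "[]" "[]"] coxeq_cancel_square[of 1 k m "[]" "[]"]
      coxeq_cancel_square[of 1 k m "[0]" "[]"] by auto
  with assms show ?thesis
    using coxeq_10[simplified] coxeq_010[simplified] by (auto simp: coxeq.refl)
qed

lemma type2_word_cases: "set p \<subseteq> {0, 1} \<Longrightarrow> \<exists>q \<in> {[], [0], [1], [0, 1]}. coxeq k m p q"
proof (induction p rule: rev_induct)
  case (snoc s p)
  then obtain q where q: "q \<in> {[], [0], [1], [0, 1]}" "coxeq k m p q" by auto
  have "s \<in> {0, 1}" using snoc.prems by auto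
  then obtain q' where q': "q' \<in> {[], [0], [1], [0, 1]}" "coxeq k m (q @ [s]) q'"
    using type2_normal_forms_snoc[OF q(1), of s k m] by blast
  have "coxeq k m (p @ [s]) q'" using coxeq.trans[OF coxeq_snoc[OF q(2)] q'(2)] .
  with q'(1) show ?case by blast
qed (auto intro: coxeq.refl)

lemma braid12_k: "coxeq k m (braid 1 2 k) []"
  by (rule coxeq_relator) (simp add: relators_def)

lemma coxeq_s2_braid12: "0 < k \<Longrightarrow> coxeq k m [2] (braid 1 2 (k - 1) @ [1])"
proof -
  assume "0 < k"
  then have "braid 1 2 k = braid 1 2 (k - 1) @ [1, 2]"
    using braid_Suc_right[of 1 2 "k - 1"] by simp
  then have "coxeq k m (braid 1 2 (k - 1) @ [1] @ [2, 2]) ([] @ [2])"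
    using coxeq_append[OF braid12_k coxeq.refl, of k m "[2]"] by simp
  moreover have "coxeq k m (braid 1 2 (k - 1) @ [1] @ [2, 2]) (braid 1 2 (k - 1) @ [1])"
    using coxeq_cancel_square[of 2 k m "braid 1 2 (k - 1) @ [1]" "[]"] by simp
  ultimately show ?thesis by (auto intro: coxeq.trans coxeq.sym)
qed

lemma typek_normal_forms_snoc:
  assumes k: "0 < k" and "j < k" and q: "q = braid 1 2 j \<or> q = braid 1 2 j @ [1]" and s: "s \<in> {1, 2}"
  shows "\<exists>j'<k. coxeq k m (q @ [s]) (braid 1 2 j') \<or> coxeq k m (q @ [s]) (braid 1 2 j' @ [1])"
proof -
  consider "q = braid 1 2 j" "s = 1" | "q = braid 1 2 j" "s = 2" "j = 0"
    | i where "q = braid 1 2 (Suc i)" "s = 2" "j = Suc i" | "q = braid 1 2 j @ [1]" "s = 1"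
    | "q = braid 1 2 j @ [1]" "s = 2"
    using q s by (cases j) auto
  then show ?thesis
  proof cases
    case 1
    then show ?thesis using \<open>j < k\<close> coxeq.refl by blast
  next
    case 2
    then show ?thesis using coxeq_s2_braid12[OF k] k by (intro exI[of _ "k - 1"]) auto
  next
    case (3 i)
    then have "coxeq k m (q @ [s]) (braid 1 2 i @ [1])"
      using coxeq_cancel_square[of 2 k m "braid 1 2 i @ [1]" "[]"] by (simp add: braid_Suc_right)
    then show ?thesis using \<open>j < k\<close> 3 by (intro exI[of _ i]) auto
  next
    case 4
    then have "coxeq k m (q @ [s]) (braid 1 2 j)"
      using coxeq_cancel_square[of 1 k m "braid 1 2 j" "[]"] by simp
    then show ?thesis using \<open>j < k\<close> by blast
  next
    case 5
    then have eq: "q @ [s] = braid 1 2 (Suc j)" by (simp add: braid_Suc_right)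
    show ?thesis
    proof (cases "Suc j < k")
      case True
      then show ?thesis by (intro exI[of _ "Suc j"]) (simp add: eq coxeq.refl)
    next
      case False
      with \<open>j < k\<close> have "Suc j = k" by simp
      then have "coxeq k m (q @ [s]) (braid 1 2 0)" using eq braid12_k[of k m] by simp
      then show ?thesis using k by blast
    qed
  qed
qed

lemma typek_word_cases:
  assumes "0 < k" "set x \<subseteq> {1, 2}"
  shows "\<exists>j<k. coxeq k m x (braid 1 2 j) \<or> coxeq k m x (braid 1 2 j @ [1])"
  using assms(2)
proof (induction x rule: rev_induct)
  case Nil
  then show ?case using assms(1) by (intro exI[of _ 0]) (auto intro: coxeq.refl)
next
  case (snoc s x)
  then obtain j q where j: "j < k" "q = braid 1 2 j \<or> q = braid 1 2 j @ [1]" and xq: "coxeq k m x q"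
    by auto
  have "s \<in> {1, 2}" using snoc.prems by auto
  with j obtain j' where "j' < k"
    "coxeq k m (q @ [s]) (braid 1 2 j') \<or> coxeq k m (q @ [s]) (braid 1 2 j' @ [1])"
    using typek_normal_forms_snoc[OF assms(1)] by blast
  then show ?case using coxeq.trans[OF coxeq_snoc[OF xq]] by blast
qed

section \<open>The cosine representation\<close>

text \<open>The contragredient of Tits' geometric representation: the coordinates \<open>x, y, z\<close> belong
  to \<open>s0, s1, s2\<close>, and \<open>ck = cos (pi/k)\<close>, \<open>cm = cos (pi/m)\<close> are the off-diagonal entries of
  the cosine form.\<close>

type_synonym vec3 = "real \<times> real \<times> real"

definition cos_refl :: "real \<Rightarrow> real \<Rightarrow> nat \<Rightarrow> vec3 \<Rightarrow> vec3" where
  "cos_refl ck cm s = (\<lambda>(x, y, z).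
     if s = 0 then (- x + 2 * cm * z, y, z)
     else if s = 1 then (x, - y + 2 * ck * z, z)
     else if s = 2 then (x, y, - z + 2 * cm * x + 2 * ck * y)
     else (x, y, z))"

lemma cos_refl_0 [simp]: "cos_refl ck cm 0 (x, y, z) = (- x + 2 * cm * z, y, z)"
  and cos_refl_1 [simp]: "cos_refl ck cm (Suc 0) (x, y, z) = (x, - y + 2 * ck * z, z)"
  and cos_refl_2 [simp]: "cos_refl ck cm 2 (x, y, z) = (x, y, - z + 2 * cm * x + 2 * ck * y)"
  by (simp_all add: cos_refl_def)

lemma cos_refl_involution [simp]: "cos_refl ck cm s (cos_refl ck cm s v) = v"
  by (cases v) (auto simp: cos_refl_def)

lemma linear_cos_refl: "linear (cos_refl ck cm s)"
proof (rule linearI)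
  fix u v :: vec3 and r :: real
  show "cos_refl ck cm s (u + v) = cos_refl ck cm s u + cos_refl ck cm s v"
    by (cases u; cases v) (simp add: cos_refl_def algebra_simps)
  show "cos_refl ck cm s (r *\<^sub>R u) = r *\<^sub>R cos_refl ck cm s u"
    by (cases u) (simp add: cos_refl_def algebra_simps)
qed

fun cos_rep :: "real \<Rightarrow> real \<Rightarrow> nat list \<Rightarrow> vec3 \<Rightarrow> vec3" where
  "cos_rep ck cm [] = id"
| "cos_rep ck cm (s # w) = cos_refl ck cm s \<circ> cos_rep ck cm w"

lemma cos_rep_append: "cos_rep ck cm (u @ v) = cos_rep ck cm u \<circ> cos_rep ck cm v"
  by (induction u) auto

lemma cos_rep_snoc [simp]: "cos_rep ck cm (u @ [s]) v = cos_rep ck cm u (cos_refl ck cm s v)"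
  by (simp add: cos_rep_append)

lemma linear_cos_rep: "linear (cos_rep ck cm w)"
proof (induction w)
  case Nil
  show ?case using linear_id by (simp add: id_def)
next
  case (Cons s w)
  show ?case using linear_compose[OF Cons.IH linear_cos_refl] by (simp add: comp_def)
qed

abbreviation ycoord :: "vec3 \<Rightarrow> real" where "ycoord v \<equiv> fst (snd v)"
abbreviation zcoord :: "vec3 \<Rightarrow> real" where "zcoord v \<equiv> snd (snd v)"

lemma ycoord_linear:
  assumes "linear f"
  shows "ycoord (f (x, y, z)) = x * ycoord (f (1, 0, 0)) + y * ycoord (f (0, 1, 0)) + z * ycoord (f (0, 0, 1))"
proof -
  have "(x, y, z) = x *\<^sub>R (1, 0, 0) + y *\<^sub>R (0, 1, 0) + z *\<^sub>R (0, 0, 1)" by simp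
  then have "f (x, y, z) = x *\<^sub>R f (1, 0, 0) + y *\<^sub>R f (0, 1, 0) + z *\<^sub>R f (0, 0, 1)"
    using linear_add[OF assms] linear_scale[OF assms] by metis
  then show ?thesis by simp
qed

lemma ycoord_cos_rep:
  "ycoord (cos_rep ck cm w (x, y, z)) = x * ycoord (cos_rep ck cm w (1, 0, 0))
     + y * ycoord (cos_rep ck cm w (0, 1, 0)) + z * ycoord (cos_rep ck cm w (0, 0, 1))"
  by (rule ycoord_linear[OF linear_cos_rep])

text \<open>The matrix of \<open>s1 s2\<close> on the plane \<open>x = 0\<close> in the coordinates \<open>(y, z)\<close>.\<close>

definition dihedral_step :: "real \<Rightarrow> real \<times> real \<Rightarrow> real \<times> real" where
  "dihedral_step c = (\<lambda>(a, b). ((4 * c\<^sup>2 - 1) * a - 2 * c * b, 2 * c * a - b))"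

lemma dihedral_step_funpow:
  "sin t * fst ((dihedral_step (cos t) ^^ j) (a, b)) = sin (2 * real j * t + t) * a - sin (2 * real j * t) * b \<and>
   sin t * snd ((dihedral_step (cos t) ^^ j) (a, b)) = sin (2 * real j * t) * a - sin (2 * real j * t - t) * b"
proof (induction j)
  case (Suc j)
  define u where "u = 2 * real j * t"
  obtain a' b' where ab: "(dihedral_step (cos t) ^^ j) (a, b) = (a', b')" by fastforce
  from Suc ab have IH: "sin t * a' = sin (u + t) * a - sin u * b" "sin t * b' = sin u * a - sin (u - t) * b"
    by (simp_all add: u_def)
  have sin_rec: "sin (x + t) = 2 * cos t * sin x - sin (x - t)" for x
    by (simp add: sin_add sin_diff algebra_simps)
  have rec: "sin (u + t) = 2 * cos t * sin u - sin (u - t)"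
    "sin (u + t + t) = 2 * cos t * sin (u + t) - sin u"
    "sin (u + t + t + t) = 2 * cos t * sin (u + t + t) - sin (u + t)"
    using sin_rec[of u] sin_rec[of "u + t"] sin_rec[of "u + t + t"]
    by (simp_all only: add_diff_cancel_right')
  have "sin t * ((4 * (cos t)\<^sup>2 - 1) * a' - 2 * cos t * b') = sin (u + t + t + t) * a - sin (u + t + t) * b"
    "sin t * (2 * cos t * a' - b') = sin (u + t + t) * a - sin (u + t) * b"
    unfolding rec(3) unfolding rec(2) using IH rec(1) by algebra+
  moreover have "2 * real (Suc j) * t + t = u + t + t + t" "2 * real (Suc j) * t = u + t + t"
    "2 * real (Suc j) * t - t = u + t"
    by (simp_all add: u_def algebra_simps)
  ultimately show ?case
    using ab by (simp add: dihedral_step_def add.commute)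
qed simp

lemma dihedral_step_funpow_period:
  assumes "2 \<le> n"
  shows "(dihedral_step (cos (pi / n)) ^^ n) v = v"
proof -
  obtain a b where v: "v = (a, b)" by fastforce
  define t where "t = pi / n"
  have "0 < t" "t < pi" using assms by (auto simp: t_def field_simps)
  then have "sin t > 0" by (rule sin_gt_zero)
  moreover have "2 * real n * t = 2 * pi" using assms by (simp add: t_def)
  ultimately show ?thesis
    using dihedral_step_funpow[of t n a b] by (simp add: v t_def sin_add sin_diff prod_eq_iff)
qed

lemma cos_pi_div_sq_neq_1: "2 \<le> n \<Longrightarrow> (cos (pi / real n))\<^sup>2 \<noteq> 1"
proof -
  assume "2 \<le> n"
  then have "0 < pi / real n" "pi / real n < pi" by (auto simp: field_simps)
  then have "sin (pi / real n) > 0" by (rule sin_gt_zero)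
  then have "(sin (pi / real n))\<^sup>2 \<noteq> 0" by simp
  then show ?thesis using sin_cos_squared_add[of "pi / real n"] by linarith
qed

lemma cos_pi_div_pos: "3 \<le> n \<Longrightarrow> cos (pi / real n) > 0"
proof -
  assume "3 \<le> n"
  then have "0 < pi / real n" "pi / real n < pi / 2" by (auto simp: field_simps)
  then show ?thesis by (intro cos_gt_zero_pi) auto
qed

text \<open>On each plane \<open>x = const\<close> the rotation \<open>s1 s2\<close> acts around its fixed point
  \<open>(x, ck p x, p x)\<close> by \<open>dihedral_step ck\<close>.\<close>

lemma cos_rep_braid12_affine:
  fixes ck cm p :: real
  assumes "p * (1 - ck\<^sup>2) = cm"
  shows "cos_rep ck cm (braid 1 2 j) (x, x * (ck * p) + a, x * p + b)
     = (x, x * (ck * p) + fst ((dihedral_step ck ^^ j) (a, b)), x * p + snd ((dihedral_step ck ^^ j) (a, b)))"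
proof (induction j)
  case (Suc j)
  obtain a' b' where ab: "(dihedral_step ck ^^ j) (a, b) = (a', b')" by fastforce
  have "cm = p - p * ck * ck" using assms by (simp add: algebra_simps power2_eq_square)
  then have "- (x * p + b') + 2 * cm * x + 2 * ck * (x * (ck * p) + a') = x * p + (- b' + 2 * ck * a')"
    by (simp only:) (simp add: algebra_simps)
  then show ?case
    using Suc ab by (simp add: braid_Suc dihedral_step_def algebra_simps power2_eq_square)
qed simp

lemma cos_rep_braid12_k:
  assumes "2 \<le> k"
  shows "cos_rep (cos (pi / k)) cm (braid 1 2 k) = id"
proof
  fix v :: vec3
  define ck where "ck = cos (pi / k)"
  define p where "p = cm / (1 - ck\<^sup>2)"
  have p: "p * (1 - ck\<^sup>2) = cm"
    using cos_pi_div_sq_neq_1[OF assms] by (simp add: p_def ck_def)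
  obtain x y z where v: "v = (x, y, z)" by (cases v) auto
  have "cos_rep ck cm (braid 1 2 k) (x, y, z) = (x, y, z)"
    using cos_rep_braid12_affine[OF p, of k x "y - x * (ck * p)" "z - x * p"]
      dihedral_step_funpow_period[OF assms, folded ck_def]
    by simp
  then show "cos_rep (cos (pi / k)) cm (braid 1 2 k) v = id v" by (simp add: v ck_def)
qed

definition swap_xy :: "vec3 \<Rightarrow> vec3" where
  "swap_xy = (\<lambda>(x, y, z). (y, x, z))"

lemma cos_rep_braid02_swap:
  "cos_rep ck cm (braid 0 2 n) = swap_xy \<circ> cos_rep cm ck (braid 1 2 n) \<circ> swap_xy"
proof (induction n)
  case 0
  show ?case by (auto simp: swap_xy_def)
next
  case (Suc n)
  have "cos_refl ck cm 0 (swap_xy v) = swap_xy (cos_refl cm ck 1 v)"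
    "cos_refl ck cm 2 (swap_xy v) = swap_xy (cos_refl cm ck 2 v)" for v
    by (cases v; simp add: swap_xy_def algebra_simps)+
  then show ?case
    using Suc by (auto simp: braid_Suc fun_eq_iff eval_nat_numeral)
qed

lemma cos_rep_braid02_m: "2 \<le> m \<Longrightarrow> cos_rep ck (cos (pi / m)) (braid 0 2 m) = id"
  unfolding cos_rep_braid02_swap cos_rep_braid12_k
  by (auto simp: swap_xy_def fun_eq_iff)

lemma cos_rep_relator:
  assumes "r \<in> relators k m" "2 \<le> k" "2 \<le> m"
  shows "cos_rep (cos (pi / k)) (cos (pi / m)) r = id"
proof -
  have "cos_rep ck cm (braid 0 1 2) = id" for ck cm
    by (auto simp: braid_def numeral_2_eq_2 fun_eq_iff)
  then show ?thesis
    using assms cos_rep_braid12_k cos_rep_braid02_m by (auto simp: relators_def fun_eq_iff)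
qed

lemma cos_rep_coxeq:
  assumes "coxeq k m u v" "2 \<le> k" "2 \<le> m"
  shows "cos_rep (cos (pi / k)) (cos (pi / m)) u = cos_rep (cos (pi / k)) (cos (pi / m)) v"
  using assms(1)
proof (induction rule: coxeq.induct)
  case (rel r u v)
  then show ?case using cos_rep_relator[OF rel assms(2,3)] by (simp add: cos_rep_append)
qed auto

lemma fst_cos_rep_typek: "set w \<subseteq> {1, 2} \<Longrightarrow> fst (cos_rep ck cm w v) = fst v"
proof (induction w arbitrary: v)
  case (Cons s w)
  then have "s = 1 \<or> s = 2" "fst (cos_rep ck cm w v) = fst v" by auto
  then show ?case by (cases "cos_rep ck cm w v") (auto simp: cos_refl_def)
qed simp

lemma ycoord_cos_rep_typem: "set w \<subseteq> {0, 2} \<Longrightarrow> ycoord (cos_rep ck cm w v) = ycoord v"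
proof (induction w arbitrary: v)
  case (Cons s w)
  then have "s = 0 \<or> s = 2" "ycoord (cos_rep ck cm w v) = ycoord v" by auto
  then show ?case by (cases "cos_rep ck cm w v") (auto simp: cos_refl_def)
qed simp

lemma cos_rep_typek_fixed_vector:
  "set w \<subseteq> {1, 2} \<Longrightarrow> cos_rep ck cm w (1 - ck\<^sup>2, ck * cm, cm) = (1 - ck\<^sup>2, ck * cm, cm)"
proof (induction w)
  case (Cons s w)
  then have "s = 1 \<or> s = 2" by auto
  with Cons show ?case by (auto simp: algebra_simps power2_eq_square)
qed simp

text \<open>The cosine form on the span of \<open>e1, e2\<close> is invariant, so the \<open>y\<close>-row of \<open>s1, s2\<close>-words
  has norm one.\<close>

lemma ycoord_cos_rep_typek_norm:
  assumes "set w \<subseteq> {1, 2}"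
  shows "(ycoord (cos_rep ck cm w (0, 1, 0)))\<^sup>2 + (ycoord (cos_rep ck cm w (0, 0, 1)))\<^sup>2
       + 2 * ck * ycoord (cos_rep ck cm w (0, 1, 0)) * ycoord (cos_rep ck cm w (0, 0, 1)) = 1"
  using assms
proof (induction w rule: rev_induct)
  case (snoc s w)
  define F1 where "F1 = ycoord (cos_rep ck cm w (0, 1, 0))"
  define F2 where "F2 = ycoord (cos_rep ck cm w (0, 0, 1))"
  have IH: "F1\<^sup>2 + F2\<^sup>2 + 2 * ck * F1 * F2 = 1" using snoc by (simp add: F1_def F2_def)
  have L: "ycoord (cos_rep ck cm w (0, y, z)) = y * F1 + z * F2" for y z
    using ycoord_cos_rep[of ck cm w 0 y z] by (simp add: F1_def F2_def)
  from snoc have "s = 1 \<or> s = 2" by auto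
  then show ?case
  proof
    assume "s = 1"
    then show ?case using IH by (simp add: L algebra_simps power2_eq_square)
  next
    assume "s = 2"
    then show ?case using IH by (simp add: L algebra_simps power2_eq_square)
  qed
qed simp

lemma cos_rep_braid12_sin:
  fixes k j :: nat and cm t :: real
  assumes "2 \<le> k"
  defines "t \<equiv> pi / real k"
  shows "sin t * ycoord (cos_rep (cos t) cm (braid 1 2 j) (0, 1, 0)) = sin (2 * real j * t + t)"
    "sin t * ycoord (cos_rep (cos t) cm (braid 1 2 j) (0, 0, 1)) = - sin (2 * real j * t)"
    "sin t * zcoord (cos_rep (cos t) cm (braid 1 2 j) (0, 1, 0)) = sin (2 * real j * t)"
    "sin t * zcoord (cos_rep (cos t) cm (braid 1 2 j) (0, 0, 1)) = - sin (2 * real j * t - t)"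
proof -
  define p where "p = cm / (1 - (cos t)\<^sup>2)"
  have "p * (1 - (cos t)\<^sup>2) = cm"
    using cos_pi_div_sq_neq_1[OF assms(1)] by (simp add: p_def t_def)
  from cos_rep_braid12_affine[OF this, of j 0]
  have "cos_rep (cos t) cm (braid 1 2 j) (0, a, b) = (0, (dihedral_step (cos t) ^^ j) (a, b))" for a b
    by simp
  with dihedral_step_funpow[of t j 1 0] dihedral_step_funpow[of t j 0 1]
  show "sin t * ycoord (cos_rep (cos t) cm (braid 1 2 j) (0, 1, 0)) = sin (2 * real j * t + t)"
    and "sin t * ycoord (cos_rep (cos t) cm (braid 1 2 j) (0, 0, 1)) = - sin (2 * real j * t)"
    and "sin t * zcoord (cos_rep (cos t) cm (braid 1 2 j) (0, 1, 0)) = sin (2 * real j * t)"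
    and "sin t * zcoord (cos_rep (cos t) cm (braid 1 2 j) (0, 0, 1)) = - sin (2 * real j * t - t)"
    by simp_all
qed

lemma dvd_of_cos_eq_1:
  assumes "0 < k" "cos (2 * real j * (pi / real k)) = 1"
  shows "k dvd j"
proof -
  obtain n :: int where "2 * real j * (pi / real k) = real_of_int n * 2 * pi"
    using assms(2) cos_one_2pi_int by blast
  then have "real j = real_of_int n * real k" using assms(1) by (simp add: field_simps)
  then have "real_of_int (int j) = real_of_int (n * int k)" by simp
  then have "int j = n * int k" by (simp only: of_int_eq_iff)
  then have "int k dvd int j" by simp
  then show ?thesis by simp
qed

lemma braid12_fixes_ycoord_imp_dvd:
  fixes k j :: nat
  assumes "2 \<le> k"
    and "ycoord (cos_rep (cos (pi / k)) cm (braid 1 2 j) (0, 1, 0)) = 1"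
    and "ycoord (cos_rep (cos (pi / k)) cm (braid 1 2 j) (0, 0, 1)) = 0"
  shows "k dvd j"
proof -
  define t where "t = pi / real k"
  have "0 < t" "t < pi" using assms(1) by (auto simp: t_def field_simps)
  then have s: "sin t > 0" by (rule sin_gt_zero)
  from cos_rep_braid12_sin[OF assms(1), of cm j, folded t_def] assms(2,3)
  have "sin (2 * real j * t + t) = sin t" "sin (2 * real j * t) = 0" by (simp_all add: t_def)
  then have "cos (2 * real j * t) * sin t = sin t" by (simp add: sin_add)
  with s have "cos (2 * real j * t) = 1" by simp
  then show ?thesis using dvd_of_cos_eq_1[of k j] assms(1) by (simp add: t_def)
qed

lemma braid12_fixes_zcoord_imp_dvd:
  fixes k j :: nat
  assumes "2 \<le> k"
    and "zcoord (cos_rep (cos (pi / k)) cm (braid 1 2 j) (0, 1, 0)) = 0"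
    and "zcoord (cos_rep (cos (pi / k)) cm (braid 1 2 j) (0, 0, 1)) = 1"
  shows "k dvd j"
proof -
  define t where "t = pi / real k"
  have "0 < t" "t < pi" using assms(1) by (auto simp: t_def field_simps)
  then have s: "sin t > 0" by (rule sin_gt_zero)
  from cos_rep_braid12_sin[OF assms(1), of cm j, folded t_def] assms(2,3) s
  have "sin (2 * real j * t - t) = - sin t" "sin (2 * real j * t) = 0" by (simp_all add: t_def)
  then have "cos (2 * real j * t) * sin t = sin t" by (simp add: sin_diff)
  with s have "cos (2 * real j * t) = 1" by simp
  then show ?thesis using dvd_of_cos_eq_1[of k j] assms(1) by (simp add: t_def)
qed

lemma cosine_rows_cases:
  fixes ck cm \<mu>0 \<mu>1 \<mu>2 \<nu>2 :: real
  assumes "ck \<noteq> 0" "ck\<^sup>2 \<noteq> 1" "cm \<noteq> 0"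
    and fixed: "(1 - ck\<^sup>2) * \<mu>0 + ck * cm * \<mu>1 + cm * \<mu>2 = ck * cm"
      "(1 - ck\<^sup>2) * (- \<mu>0) + ck * cm * \<mu>1 + cm * \<nu>2 = ck * cm"
    and norm: "\<mu>1\<^sup>2 + \<mu>2\<^sup>2 + 2 * ck * \<mu>1 * \<mu>2 = 1" "\<mu>1\<^sup>2 + \<nu>2\<^sup>2 + 2 * ck * \<mu>1 * \<nu>2 = 1"
  shows "\<mu>1 = 1 \<and> \<mu>2 = 0 \<or> \<mu>1 = - 1 \<and> \<mu>2 = 2 * ck"
proof -
  have "cm * (2 * ck * \<mu>1 + \<mu>2 + \<nu>2) = cm * (2 * ck)"
    using fixed by (simp add: algebra_simps)
  with \<open>cm \<noteq> 0\<close> have sum: "\<mu>2 + \<nu>2 + 2 * ck * \<mu>1 = 2 * ck" by simp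
  have "(\<mu>2 - \<nu>2) * (\<mu>2 + \<nu>2 + 2 * ck * \<mu>1) = 0"
    using norm by (simp add: algebra_simps power2_eq_square)
  with sum \<open>ck \<noteq> 0\<close> have "\<mu>2 = \<nu>2" by simp
  with sum have \<mu>2: "\<mu>2 = ck - ck * \<mu>1" by simp
  have "(1 - ck\<^sup>2) * (\<mu>1\<^sup>2 - 1) = 0"
    using norm(1) unfolding \<mu>2 by (simp add: algebra_simps power2_eq_square)
  with \<open>ck\<^sup>2 \<noteq> 1\<close> have "\<mu>1\<^sup>2 = 1" by simp
  then have "\<mu>1 = 1 \<or> \<mu>1 = - 1" by (simp add: power2_eq_1_iff)
  then show ?thesis using \<mu>2 by auto
qed

section \<open>Word problems in the triangle group\<close>

locale triangle_group =
  fixes k m :: nat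
  assumes k_ge_3: "3 \<le> k" and m_ge_3: "3 \<le> m"
begin

abbreviation ck :: real where "ck \<equiv> cos (pi / real k)"
abbreviation cm :: real where "cm \<equiv> cos (pi / real m)"
abbreviation \<rho> :: "nat list \<Rightarrow> vec3 \<Rightarrow> vec3" where "\<rho> \<equiv> cos_rep ck cm"

lemma ck_pos: "ck > 0" and cm_pos: "cm > 0"
  using cos_pi_div_pos k_ge_3 m_ge_3 by auto

lemma ck_sq_neq_1: "ck\<^sup>2 \<noteq> 1"
  using cos_pi_div_sq_neq_1 k_ge_3 by simp

lemma \<rho>_coxeq: "coxeq k m u v \<Longrightarrow> \<rho> u = \<rho> v"
  using cos_rep_coxeq k_ge_3 m_ge_3 by simp

lemma coxeq_braid12_Nil:
  assumes "coxeq k m w (braid 1 2 j)" "k dvd j" "j \<le> k"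
  shows "coxeq k m w []"
proof -
  from assms(2,3) have "j = 0 \<or> j = k" by (auto dest: dvd_imp_le)
  then show ?thesis
  proof
    assume "j = k"
    with assms(1) have "coxeq k m w (braid 1 2 k)" by simp
    then show ?thesis using braid12_k by (rule coxeq.trans)
  qed (use assms(1) in simp)
qed

lemma s1_not_typem: "set g \<subseteq> {0, 2} \<Longrightarrow> \<not> coxeq k m [1] g"
proof
  assume g: "set g \<subseteq> {0, 2}" and eq: "coxeq k m [1] g"
  from eq have "\<rho> [1] = \<rho> g" by (rule \<rho>_coxeq)
  then have "ycoord (\<rho> [1] (0, 1, 0)) = ycoord (\<rho> g (0, 1, 0))" by simp
  also have "\<dots> = 1" using ycoord_cos_rep_typem[OF g] by simp
  finally show False by simp
qed

lemma typek_ycoord_row_trivial: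
  assumes z: "set z \<subseteq> {1, 2}"
    and fix1: "ycoord (\<rho> z (0, 1, 0)) = 1" and fix2: "ycoord (\<rho> z (0, 0, 1)) = 0"
  shows "coxeq k m z [] \<or> coxeq k m z [2]"
proof -
  have trivial: "coxeq k m w []"
    if "coxeq k m w (braid 1 2 j)" "j \<le> k"
      "ycoord (\<rho> w (0, 1, 0)) = 1" "ycoord (\<rho> w (0, 0, 1)) = 0" for w j
  proof (rule coxeq_braid12_Nil[OF that(1) _ that(2)])
    show "k dvd j"
      using that(3,4) k_ge_3 braid12_fixes_ycoord_imp_dvd[of k cm j] \<rho>_coxeq[OF that(1)] by simp
  qed
  obtain j where "j < k" and cases: "coxeq k m z (braid 1 2 j) \<or> coxeq k m z (braid 1 2 j @ [1])"
    using typek_word_cases[of k z m] k_ge_3 z by auto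
  then show ?thesis
  proof (elim disjE)
    assume "coxeq k m z (braid 1 2 j)"
    then show ?thesis using trivial \<open>j < k\<close> fix1 fix2 by simp
  next
    assume "coxeq k m z (braid 1 2 j @ [1])"
    then have "coxeq k m (z @ [2]) (braid 1 2 (Suc j))"
      using coxeq_snoc by (fastforce simp: braid_Suc_right)
    moreover have "ycoord (\<rho> (z @ [2]) (0, 1, 0)) = 1" "ycoord (\<rho> (z @ [2]) (0, 0, 1)) = 0"
      using ycoord_cos_rep[of ck cm z 0 1 "2 * ck"] ycoord_cos_rep[of ck cm z 0 0 "- 1"] fix1 fix2
      by simp_all
    ultimately have "coxeq k m (z @ [2]) []" using trivial \<open>j < k\<close> by simp
    then have "coxeq k m (z @ [2, 2]) [2]" using coxeq_snoc by fastforce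
    moreover have "coxeq k m (z @ [2, 2]) z" using coxeq_cancel_square[of 2 k m z "[]"] by simp
    ultimately show ?thesis by (blast intro: coxeq.trans coxeq.sym)
  qed
qed

lemma zcoord_fixed_of_conj_typek:
  assumes x: "set x \<subseteq> {1, 2}" and y: "set y \<subseteq> {1, 2}" and conj: "coxeq k m (0 # x @ [0]) y"
  shows "zcoord (\<rho> x (a, b, c)) = c"
proof -
  obtain a' b' c' where xu: "\<rho> x (a, b, c) = (a', b', c')" by (cases "\<rho> x (a, b, c)")
  have "cos_refl ck cm 0 (\<rho> x (a, b, c)) = \<rho> y (cos_refl ck cm 0 (a, b, c))"
    using fun_cong[OF \<rho>_coxeq[OF conj], of "cos_refl ck cm 0 (a, b, c)"]
    by (simp add: cos_rep_append del: cos_refl_0)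
  then have "fst (cos_refl ck cm 0 (\<rho> x (a, b, c))) = fst (cos_refl ck cm 0 (a, b, c))"
    using fst_cos_rep_typek[OF y] by (simp del: cos_refl_0)
  then have "- a' + 2 * cm * c' = - a + 2 * cm * c" by (simp add: xu)
  moreover have "a' = a" using fst_cos_rep_typek[OF x, of ck cm "(a, b, c)"] by (simp add: xu)
  ultimately have "cm * c' = cm * c" by simp
  then show ?thesis using cm_pos xu by simp
qed

text \<open>\<open>\<langle>s1, s2\<rangle> \<inter> s0 \<langle>s1, s2\<rangle> s0 = \<langle>s1\<rangle>\<close>: an element of the intersection fixes the
  \<open>z\<close>-coordinate, which singles out \<open>1\<close> and \<open>s1\<close> among the normal forms.\<close>

lemma typek_conj_s0_typek:
  assumes x: "set x \<subseteq> {1, 2}" and y: "set y \<subseteq> {1, 2}" and conj: "coxeq k m (0 # x @ [0]) y"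
  shows "coxeq k m x [] \<or> coxeq k m x [1]"
proof -
  note zfix = zcoord_fixed_of_conj_typek[OF x y conj]
  have trivial: "coxeq k m w []"
    if "coxeq k m w (braid 1 2 j)" "j \<le> k"
      "zcoord (\<rho> w (0, 1, 0)) = 0" "zcoord (\<rho> w (0, 0, 1)) = 1" for w j
  proof (rule coxeq_braid12_Nil[OF that(1) _ that(2)])
    show "k dvd j"
      using that(3,4) k_ge_3 braid12_fixes_zcoord_imp_dvd[of k cm j] \<rho>_coxeq[OF that(1)] by simp
  qed
  obtain j where "j < k" and cases: "coxeq k m x (braid 1 2 j) \<or> coxeq k m x (braid 1 2 j @ [1])"
    using typek_word_cases[of k x m] k_ge_3 x by auto
  then show ?thesis
  proof (elim disjE)
    assume "coxeq k m x (braid 1 2 j)"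
    then show ?thesis using trivial \<open>j < k\<close> zfix by simp
  next
    assume "coxeq k m x (braid 1 2 j @ [1])"
    then have "coxeq k m (x @ [1]) (braid 1 2 j @ [1, 1])" using coxeq_snoc by fastforce
    also have "coxeq k m \<dots> (braid 1 2 j)" using coxeq_cancel_square[of 1 k m "braid 1 2 j" "[]"] by simp
    finally have "coxeq k m (x @ [1]) []"
      using trivial \<open>j < k\<close> zfix[of 0 "- 1" 0] zfix[of 0 "2 * ck" 1] by simp
    then have "coxeq k m (x @ [1, 1]) [1]" using coxeq_snoc by fastforce
    moreover have "coxeq k m (x @ [1, 1]) x" using coxeq_cancel_square[of 1 k m x "[]"] by simp
    ultimately show ?thesis by (blast intro: coxeq.trans coxeq.sym)
  qed
qed

text \<open>By \<open>s0 e1 = e1\<close>, \<open>s0 e0 = - e0\<close> and \<open>y \<circ> \<rho> t = y\<close>, the \<open>y\<close>-rows of \<open>a\<close> and \<open>c\<close> differ only in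
  the sign of the \<open>x\<close>-entry; together with the two invariants this leaves the rows of \<open>1\<close> and \<open>s1\<close>.\<close>

lemma typek_row_of_s0_coset:
  assumes a: "set a \<subseteq> {1, 2}" and c: "set c \<subseteq> {1, 2}" and t: "set t \<subseteq> {0, 2}"
    and eq: "coxeq k m (c @ [0]) (t @ a)"
  shows "ycoord (\<rho> a (0, 1, 0)) = 1 \<and> ycoord (\<rho> a (0, 0, 1)) = 0 \<or>
    ycoord (\<rho> a (0, 1, 0)) = - 1 \<and> ycoord (\<rho> a (0, 0, 1)) = 2 * ck"
proof -
  have row: "ycoord (\<rho> c (cos_refl ck cm 0 v)) = ycoord (\<rho> a v)" for v
    using fun_cong[OF \<rho>_coxeq[OF eq], of v] ycoord_cos_rep_typem[OF t] by (simp add: cos_rep_append)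
  define \<mu>0 \<mu>1 \<mu>2 where \<mu>_def: "\<mu>0 = ycoord (\<rho> a (1, 0, 0))" "\<mu>1 = ycoord (\<rho> a (0, 1, 0))"
    "\<mu>2 = ycoord (\<rho> a (0, 0, 1))"
  define \<nu>0 \<nu>1 \<nu>2 where \<nu>_def: "\<nu>0 = ycoord (\<rho> c (1, 0, 0))" "\<nu>1 = ycoord (\<rho> c (0, 1, 0))"
    "\<nu>2 = ycoord (\<rho> c (0, 0, 1))"
  have "\<nu>0 = - \<mu>0" "\<nu>1 = \<mu>1"
    using row[of "(1, 0, 0)"] row[of "(0, 1, 0)"] ycoord_cos_rep[of ck cm c "- 1" 0 0]
    by (simp_all add: \<mu>_def \<nu>_def)
  moreover have "(1 - ck\<^sup>2) * \<mu>0 + ck * cm * \<mu>1 + cm * \<mu>2 = ck * cm"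
    "(1 - ck\<^sup>2) * \<nu>0 + ck * cm * \<nu>1 + cm * \<nu>2 = ck * cm"
    using ycoord_cos_rep[of ck cm a "1 - ck\<^sup>2" "ck * cm" cm] cos_rep_typek_fixed_vector[OF a]
      ycoord_cos_rep[of ck cm c "1 - ck\<^sup>2" "ck * cm" cm] cos_rep_typek_fixed_vector[OF c]
    by (simp_all add: \<mu>_def \<nu>_def algebra_simps)
  moreover have "\<mu>1\<^sup>2 + \<mu>2\<^sup>2 + 2 * ck * \<mu>1 * \<mu>2 = 1" "\<nu>1\<^sup>2 + \<nu>2\<^sup>2 + 2 * ck * \<nu>1 * \<nu>2 = 1"
    using ycoord_cos_rep_typek_norm[OF a] ycoord_cos_rep_typek_norm[OF c]
    by (simp_all add: \<mu>_def \<nu>_def)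
  ultimately show ?thesis
    using cosine_rows_cases[of ck cm \<mu>0 \<mu>1 \<mu>2 \<nu>2] ck_pos cm_pos ck_sq_neq_1 by (auto simp: \<mu>_def)
qed

lemma typek_row_cases:
  assumes a: "set a \<subseteq> {1, 2}" and c: "set c \<subseteq> {1, 2}" and t: "set t \<subseteq> {0, 2}"
    and eq: "coxeq k m (c @ [0]) (t @ a)"
  shows "coxeq k m a [] \<or> coxeq k m a [2] \<or> coxeq k m a [1] \<or> coxeq k m a [2, 1]"
  using typek_row_of_s0_coset[OF a c t eq]
proof
  assume "ycoord (\<rho> a (0, 1, 0)) = 1 \<and> ycoord (\<rho> a (0, 0, 1)) = 0"
  then show ?thesis using typek_ycoord_row_trivial[OF a] by auto
next
  assume row: "ycoord (\<rho> a (0, 1, 0)) = - 1 \<and> ycoord (\<rho> a (0, 0, 1)) = 2 * ck"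
  have "set (a @ [1]) \<subseteq> {1, 2}" using a by auto
  moreover have "ycoord (\<rho> (a @ [1]) (0, 1, 0)) = 1" "ycoord (\<rho> (a @ [1]) (0, 0, 1)) = 0"
    using ycoord_cos_rep[of ck cm a 0 "- 1" 0] ycoord_cos_rep[of ck cm a 0 "2 * ck" 1] row by simp_all
  ultimately have "coxeq k m (a @ [1]) [] \<or> coxeq k m (a @ [1]) [2]"
    by (rule typek_ycoord_row_trivial)
  then have "coxeq k m (a @ [1, 1]) [1] \<or> coxeq k m (a @ [1, 1]) [2, 1]"
    using coxeq_snoc by fastforce
  moreover have "coxeq k m (a @ [1, 1]) a" using coxeq_cancel_square[of 1 k m a "[]"] by simp
  ultimately show ?thesis by (blast intro: coxeq.trans coxeq.sym)
qed

lemma typek_s0_typek_typem: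
  assumes a: "set a \<subseteq> {1, 2}" and c: "set c \<subseteq> {1, 2}" and t: "set t \<subseteq> {0, 2}"
    and eq: "coxeq k m (0 # c) (a @ t)"
  shows "coxeq k m a [] \<or> coxeq k m a [2] \<or> coxeq k m a [1] \<or> coxeq k m a [1, 2]"
proof -
  have "coxeq k m (rev c @ [0]) (rev t @ rev a)" using coxeq_rev[OF eq] by simp
  then have "coxeq k m (rev a) [] \<or> coxeq k m (rev a) [2] \<or> coxeq k m (rev a) [1] \<or> coxeq k m (rev a) [2, 1]"
    using typek_row_cases[of "rev a" "rev c" "rev t"] a c t by simp
  then show ?thesis using coxeq_rev[of k m "rev a"] by fastforce
qed

end

section \<open>Buildings as W-metric spaces\<close>

lemma cox_len_le_length: "set w \<subseteq> {0, 1, 2} \<Longrightarrow> cox_len k m w \<le> length w"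
  unfolding cox_len_def by (rule Least_le) (auto intro: coxeq.refl)

lemma cox_len_witness:
  "set w \<subseteq> {0, 1, 2} \<Longrightarrow> \<exists>u. set u \<subseteq> {0, 1, 2} \<and> length u = cox_len k m w \<and> coxeq k m u w"
  unfolding cox_len_def by (rule LeastI_ex) (auto intro: coxeq.refl)

lemma cox_len_coxeq: "coxeq k m u w \<Longrightarrow> cox_len k m u = cox_len k m w"
  unfolding cox_len_def by (metis coxeq.sym coxeq.trans)

definition reduced_word :: "nat \<Rightarrow> nat \<Rightarrow> nat list \<Rightarrow> bool" where
  "reduced_word k m w \<longleftrightarrow> set w \<subseteq> {0, 1, 2} \<and> cox_len k m w = length w"

lemma reduced_word_appendD: "reduced_word k m (p @ q) \<Longrightarrow> reduced_word k m q"
proof -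
  assume pq: "reduced_word k m (p @ q)"
  then have p: "set p \<subseteq> {0, 1, 2}" and q: "set q \<subseteq> {0, 1, 2}" by (auto simp: reduced_word_def)
  obtain q' where q': "set q' \<subseteq> {0, 1, 2}" "length q' = cox_len k m q" "coxeq k m q' q"
    using cox_len_witness[OF q] by blast
  have "length p + length q = cox_len k m (p @ q')"
    using pq cox_len_coxeq[OF coxeq_append[OF coxeq.refl q'(3)]] by (simp add: reduced_word_def)
  also have "\<dots> \<le> length p + cox_len k m q" using cox_len_le_length[of "p @ q'"] p q' by simp
  finally show ?thesis using cox_len_le_length[OF q, of k m] q by (simp add: reduced_word_def)
qed

lemma reduced_word_rev: "reduced_word k m w \<Longrightarrow> reduced_word k m (rev w)"
proof -
  assume w: "reduced_word k m w"
  then have rw: "set (rev w) \<subseteq> {0, 1, 2}" by (auto simp: reduced_word_def)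
  obtain u where u: "set u \<subseteq> {0, 1, 2}" "length u = cox_len k m (rev w)" "coxeq k m u (rev w)"
    using cox_len_witness[OF rw] by blast
  have "length w = cox_len k m (rev u)"
    using w cox_len_coxeq[OF coxeq_rev[OF u(3)]] by (simp add: reduced_word_def)
  also have "\<dots> \<le> cox_len k m (rev w)" using cox_len_le_length[of "rev u"] u by simp
  finally show ?thesis using cox_len_le_length[OF rw, of k m] rw by (simp add: reduced_word_def)
qed

locale W_building =
  fixes k m :: nat and \<delta> :: "'c \<Rightarrow> 'c \<Rightarrow> nat list"
  assumes building: "building k m \<delta>"
begin

lemma delta_Nil_iff: "coxeq k m (\<delta> C D) [] \<longleftrightarrow> C = D"
  using building unfolding building_def by blast

lemma delta_panel:
  "s < 3 \<Longrightarrow> coxeq k m (\<delta> C' C) [s] \<Longrightarrow>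
   coxeq k m (\<delta> C' D) (s # \<delta> C D) \<or> coxeq k m (\<delta> C' D) (\<delta> C D)"
  using building unfolding building_def by blast

lemma delta_panel_longer:
  "s < 3 \<Longrightarrow> coxeq k m (\<delta> C' C) [s] \<Longrightarrow> cox_len k m (s # \<delta> C D) = cox_len k m (\<delta> C D) + 1 \<Longrightarrow>
   coxeq k m (\<delta> C' D) (s # \<delta> C D)"
  using building unfolding building_def by blast

lemma delta_panel_exists:
  "s < 3 \<Longrightarrow> \<exists>C'. coxeq k m (\<delta> C' C) [s] \<and> coxeq k m (\<delta> C' D) (s # \<delta> C D)"
  using building unfolding building_def by blast

text \<open>Walking along a reduced word for \<open>\<delta> Y B\<close>, each panel step lengthens the distance to \<open>Z\<close>
  because \<open>rev f @ q\<close> stays reduced.\<close>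

lemma delta_rev_aux:
  "coxeq k m (\<delta> Y B) f \<Longrightarrow> coxeq k m (\<delta> Y Z) q \<Longrightarrow> reduced_word k m (rev f @ q) \<Longrightarrow>
   coxeq k m (\<delta> B Z) (rev f @ q)"
proof (induction f arbitrary: Y q)
  case Nil
  then show ?case using delta_Nil_iff by auto
next
  case (Cons s f)
  have s: "s < 3" using Cons.prems(3) by (auto simp: reduced_word_def)
  obtain X where X: "coxeq k m (\<delta> X Y) [s]" "coxeq k m (\<delta> X B) (s # \<delta> Y B)"
    using delta_panel_exists[OF s] by blast
  have XB: "coxeq k m (\<delta> X B) f" using X(2) coxeq_cancel_head[OF s Cons.prems(1)] by (rule coxeq.trans)
  have sq: "reduced_word k m (s # q)" and q: "reduced_word k m q"
    using reduced_word_appendD[of k m "rev f" "s # q"] reduced_word_appendD[of k m "rev f @ [s]" q]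
      Cons.prems(3) by auto
  have "cox_len k m (s # \<delta> Y Z) = cox_len k m (\<delta> Y Z) + 1"
    using sq q cox_len_coxeq[OF Cons.prems(2)] cox_len_coxeq[OF coxeq_Cons[OF Cons.prems(2)]]
    by (simp add: reduced_word_def)
  then have "coxeq k m (\<delta> X Z) (s # \<delta> Y Z)" by (rule delta_panel_longer[OF s X(1)])
  then have "coxeq k m (\<delta> X Z) (s # q)"
    using coxeq_Cons[OF Cons.prems(2)] by (rule coxeq.trans)
  from Cons.IH[OF XB this] Cons.prems(3) show ?case by simp
qed

lemma delta_swap: "coxeq k m (\<delta> B A) (rev (\<delta> A B))"
proof -
  have "set (\<delta> A B) \<subseteq> {0, 1, 2}" using building unfolding building_def by blast
  then obtain u where u: "set u \<subseteq> {0, 1, 2}" "length u = cox_len k m (\<delta> A B)" "coxeq k m u (\<delta> A B)"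
    using cox_len_witness by blast
  have "reduced_word k m u" using u cox_len_coxeq[OF u(3)] by (simp add: reduced_word_def)
  then have "coxeq k m (\<delta> B A) (rev u)"
    using delta_rev_aux[of A B u A "[]"] coxeq.sym[OF u(3)] delta_Nil_iff[of A A]
    by (simp add: reduced_word_rev)
  also have "coxeq k m (rev u) (rev (\<delta> A B))" by (rule coxeq_rev[OF u(3)])
  finally show ?thesis .
qed

lemma delta_swap_single: "coxeq k m (\<delta> A B) [s] \<Longrightarrow> coxeq k m (\<delta> B A) [s]"
  using delta_swap[of B A] coxeq_rev[of k m "\<delta> A B" "[s]"] by (auto intro: coxeq.trans)

lemma delta_panel_right:
  assumes s: "s < 3" and YZ: "coxeq k m (\<delta> Y Z) [s]"
  shows "coxeq k m (\<delta> X Z) (\<delta> X Y) \<or> coxeq k m (\<delta> X Z) (\<delta> X Y @ [s])"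
proof -
  have XZ: "coxeq k m (\<delta> X Z) (rev (\<delta> Z X))" by (rule delta_swap)
  have YX: "coxeq k m (rev (\<delta> Y X)) (\<delta> X Y)" using coxeq.sym[OF delta_swap[of X Y]] .
  from delta_panel[OF s delta_swap_single[OF YZ], of X] show ?thesis
  proof
    assume "coxeq k m (\<delta> Z X) (s # \<delta> Y X)"
    from coxeq_rev[OF this] have "coxeq k m (rev (\<delta> Z X)) (rev (\<delta> Y X) @ [s])" by simp
    also have "coxeq k m \<dots> (\<delta> X Y @ [s])" using coxeq_snoc[OF YX] .
    finally show ?thesis using XZ by (blast intro: coxeq.trans)
  next
    assume "coxeq k m (\<delta> Z X) (\<delta> Y X)"
    then show ?thesis using XZ YX coxeq_rev by (blast intro: coxeq.trans)
  qed
qed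

lemma delta_append_residue:
  "set h \<subseteq> J \<Longrightarrow> J \<subseteq> {0, 1, 2} \<Longrightarrow> coxeq k m (\<delta> Y Z) h \<Longrightarrow>
   \<exists>t. set t \<subseteq> J \<and> coxeq k m (\<delta> X Z) (\<delta> X Y @ t)"
proof (induction h arbitrary: Y)
  case Nil
  then have "Y = Z" using delta_Nil_iff by blast
  then show ?case by (intro exI[of _ "[]"]) (auto intro: coxeq.refl)
next
  case (Cons s h)
  have sJ: "s \<in> J" and s: "s < 3" using Cons.prems by auto
  obtain W where W: "coxeq k m (\<delta> W Y) [s]" "coxeq k m (\<delta> W Z) (s # \<delta> Y Z)"
    using delta_panel_exists[OF s] by blast
  have "coxeq k m (\<delta> W Z) h" using W(2) coxeq_cancel_head[OF s Cons.prems(3)] by (rule coxeq.trans)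
  then have "\<exists>t. set t \<subseteq> J \<and> coxeq k m (\<delta> X Z) (\<delta> X W @ t)"
    using Cons.IH Cons.prems(1,2) by simp
  then obtain t where t: "set t \<subseteq> J" "coxeq k m (\<delta> X Z) (\<delta> X W @ t)" by blast
  from delta_panel_right[OF s delta_swap_single[OF W(1)], of X] show ?case
  proof
    assume "coxeq k m (\<delta> X W) (\<delta> X Y)"
    then have "coxeq k m (\<delta> X Z) (\<delta> X Y @ t)"
      using t(2) coxeq_append[OF _ coxeq.refl] by (blast intro: coxeq.trans)
    then show ?case using t(1) by blast
  next
    assume "coxeq k m (\<delta> X W) (\<delta> X Y @ [s])"
    then have "coxeq k m (\<delta> X Z) (\<delta> X Y @ s # t)"
      using t(2) coxeq_append[OF _ coxeq.refl, of k m "\<delta> X W" "\<delta> X Y @ [s]" t] by (simp add: coxeq.trans)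
    then show ?case using t(1) sJ by (intro exI[of _ "s # t"]) auto
  qed
qed

abbreviation res :: "nat set \<Rightarrow> 'c \<Rightarrow> 'c set" where
  "res J C \<equiv> residue k m \<delta> J C"

lemma mem_res_iff: "D \<in> res J C \<longleftrightarrow> (\<exists>u. set u \<subseteq> J \<and> coxeq k m (\<delta> C D) u)"
  by (simp add: residue_def)

lemma mem_resI: "set u \<subseteq> J \<Longrightarrow> coxeq k m (\<delta> C D) u \<Longrightarrow> D \<in> res J C"
  by (auto simp: mem_res_iff)

lemma mem_res_single: "coxeq k m (\<delta> C D) [s] \<Longrightarrow> s \<in> J \<Longrightarrow> D \<in> res J C"
  by (rule mem_resI[of "[s]"]) auto

lemma res_self: "C \<in> res J C"
  using delta_Nil_iff[of C C] by (intro mem_resI[of "[]"]) auto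

lemma res_eq:
  assumes J: "J \<subseteq> {0, 1, 2}" and D: "D \<in> res J C"
  shows "res J D = res J C"
proof -
  obtain u where u: "set u \<subseteq> J" "coxeq k m (\<delta> C D) u" using D by (auto simp: mem_res_iff)
  have DC: "coxeq k m (\<delta> D C) (rev u)" using delta_swap[of D C] coxeq_rev[OF u(2)] by (rule coxeq.trans)
  have "E \<in> res J C" if E: "E \<in> res J D" for E
  proof -
    obtain h where h: "set h \<subseteq> J" "coxeq k m (\<delta> D E) h" using E by (auto simp: mem_res_iff)
    obtain t where "set t \<subseteq> J" "coxeq k m (\<delta> C E) (\<delta> C D @ t)"
      using delta_append_residue[OF h(1) J h(2)] by blast
    then show ?thesis using u coxeq.trans[OF _ coxeq_append[OF u(2) coxeq.refl]]
      by (intro mem_resI[of "u @ t"]) auto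
  qed
  moreover have "E \<in> res J D" if E: "E \<in> res J C" for E
  proof -
    obtain h where h: "set h \<subseteq> J" "coxeq k m (\<delta> C E) h" using E by (auto simp: mem_res_iff)
    obtain t where "set t \<subseteq> J" "coxeq k m (\<delta> D E) (\<delta> D C @ t)"
      using delta_append_residue[OF h(1) J h(2)] by blast
    then show ?thesis using u coxeq.trans[OF _ coxeq_append[OF DC coxeq.refl]]
      by (intro mem_resI[of "rev u @ t"]) auto
  qed
  ultimately show ?thesis by blast
qed

lemma vertex_eq_res:
  "vertex_of_type k m \<delta> J x \<Longrightarrow> J \<subseteq> {0, 1, 2} \<Longrightarrow> C \<in> x \<Longrightarrow> x = res J C"
  unfolding vertex_of_type_def using res_eq by blast

lemma res_eq_if_mem: "J \<subseteq> {0, 1, 2} \<Longrightarrow> D \<in> res J C \<Longrightarrow> C \<in> res J D"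
  using res_eq[of J D C] res_self[of C J] by simp

text \<open>Two chambers of a type-\<open>2\<close> vertex lying in different type-\<open>k\<close> vertices can be joined by an
  \<open>s0\<close>-panel inside it: the Klein four-group \<open>\<langle>s0, s1\<rangle>\<close> leaves only \<open>s0\<close> and \<open>s0 s1\<close> as
  Weyl distances, and an \<open>s0 s1\<close>-gallery is rerouted through its middle chamber.\<close>

lemma s0_neighbour_in_type2:
  assumes vv: "res {1, 2} C \<noteq> res {1, 2} C1" and C1: "C1 \<in> res {0, 1} C"
  shows "\<exists>C'. C' \<in> res {1, 2} C1 \<and> C' \<in> res {0, 1} C \<and> coxeq k m (\<delta> C C') [0]"
proof -
  obtain p where p: "set p \<subseteq> {0, 1}" "coxeq k m (\<delta> C C1) p" using C1 by (auto simp: mem_res_iff)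
  have not_typek: False if "coxeq k m (\<delta> C C1) q" "set q \<subseteq> {1, 2}" for q
    using vv res_eq[OF _ mem_resI[OF that(2,1)]] by simp
  obtain q where "q \<in> {[], [0], [1], [0, 1]}" "coxeq k m p q"
    using type2_word_cases[OF p(1), of k m] by blast
  with p(2) have q: "q \<in> {[], [0], [1], [0, 1]}" "coxeq k m (\<delta> C C1) q"
    using coxeq.trans by blast+
  from q(1) show ?thesis
  proof (elim insertE emptyE)
    assume "q = []"
    then show ?thesis using not_typek[OF q(2)] by simp
  next
    assume "q = [0]"
    then show ?thesis using q(2) C1 res_self by blast
  next
    assume "q = [1]"
    then show ?thesis using not_typek[OF q(2)] by simp
  next
    assume "q = [0, 1]"
    obtain X where X: "coxeq k m (\<delta> X C) [0]" "coxeq k m (\<delta> X C1) (0 # \<delta> C C1)"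
      using delta_panel_exists[of 0] by auto
    have "coxeq k m (0 # \<delta> C C1) [0, 0, 1]" using coxeq_Cons[OF q(2)] \<open>q = [0, 1]\<close> by simp
    also have "coxeq k m [0, 0, 1] [1]" using coxeq_cancel_square[of 0 k m "[]" "[1]"] by simp
    finally have "coxeq k m (\<delta> X C1) [1]" using X(2) by (blast intro: coxeq.trans)
    then have "X \<in> res {1, 2} C1" using mem_res_single[OF delta_swap_single] by simp
    moreover have "X \<in> res {0, 1} C" using mem_res_single[OF delta_swap_single[OF X(1)]] by simp
    ultimately show ?thesis using res_eq[of "{1, 2}" X C1] delta_swap_single[OF X(1)] by auto
  qed
qed

lemma delta_through_s0_neighbour:
  assumes vv: "res {1, 2} C \<noteq> res {1, 2} C'" and e: "coxeq k m (\<delta> C C') [0]"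
    and D': "D' \<in> res {1, 2} C'"
  shows "coxeq k m (\<delta> C D') (0 # \<delta> C' D')"
proof -
  have False if same: "coxeq k m (\<delta> C D') (\<delta> C' D')"
  proof -
    obtain u where u: "set u \<subseteq> {1, 2}" "coxeq k m (\<delta> C' D') u" using D' by (auto simp: mem_res_iff)
    have "D' \<in> res {1, 2} C" using mem_resI[OF u(1) coxeq.trans[OF same u(2)]] .
    then show False using vv D' res_eq[of "{1, 2}" D' C] res_eq[of "{1, 2}" D' C'] by simp
  qed
  then show ?thesis using delta_panel[of 0 C C' D'] e by auto
qed

lemma res_01_meets_res_02:
  assumes "coxeq k m (\<delta> C E) a"
    and "coxeq k m a [] \<or> coxeq k m a [1] \<or> coxeq k m a [2] \<or> coxeq k m a [1, 2]"
  shows "res {0, 1} C \<inter> res {0, 2} E \<noteq> {}"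
  using assms(2)
proof (elim disjE)
  assume "coxeq k m a []"
  then have "E \<in> res {0, 1} C" using coxeq.trans[OF assms(1)] by (intro mem_resI[of "[]"]) auto
  then show ?thesis using res_self[of E] by auto
next
  assume "coxeq k m a [1]"
  then have "E \<in> res {0, 1} C" using assms(1) by (blast intro: mem_res_single coxeq.trans)
  then show ?thesis using res_self[of E] by auto
next
  assume "coxeq k m a [2]"
  then have "C \<in> res {0, 2} E"
    using assms(1) by (blast intro: mem_res_single delta_swap_single coxeq.trans)
  then show ?thesis using res_self[of C] by auto
next
  assume a12: "coxeq k m a [1, 2]"
  obtain X where X: "coxeq k m (\<delta> X C) [1]" "coxeq k m (\<delta> X E) (1 # \<delta> C E)"
    using delta_panel_exists[of 1] by auto
  have "coxeq k m (1 # \<delta> C E) [1, 1, 2]" using coxeq_Cons[OF coxeq.trans[OF assms(1) a12]] .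
  also have "coxeq k m [1, 1, 2] [2]" using coxeq_cancel_square[of 1 k m "[]" "[2]"] by simp
  finally have "coxeq k m (\<delta> X E) [2]" using X(2) by (blast intro: coxeq.trans)
  then have "X \<in> res {0, 2} E" using mem_res_single[OF delta_swap_single] by simp
  moreover have "X \<in> res {0, 1} C" using mem_res_single[OF delta_swap_single[OF X(1)]] by simp
  ultimately show ?thesis by auto
qed

lemma edge_typek_type2_chambers:
  assumes v: "vertex_of_type k m \<delta> typek v" and v': "vertex_of_type k m \<delta> typek v'" and "v \<noteq> v'"
    and w: "vertex_of_type k m \<delta> type2 w" and "adjacent v w" "adjacent v' w"
  obtains C C' where "v = res {1, 2} C" "v' = res {1, 2} C'" "w = res {0, 1} C"
    "res {1, 2} C \<noteq> res {1, 2} C'" "coxeq k m (\<delta> C C') [0]"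
proof -
  obtain C C1 where C: "C \<in> v" "C \<in> w" and C1: "C1 \<in> v'" "C1 \<in> w"
    using \<open>adjacent v w\<close> \<open>adjacent v' w\<close> unfolding adjacent_def by blast
  have eq: "v = res {1, 2} C" "v' = res {1, 2} C1" "w = res {0, 1} C"
    using vertex_eq_res v v' w C C1 by auto
  then obtain C' where "C' \<in> res {1, 2} C1" "C' \<in> res {0, 1} C" "coxeq k m (\<delta> C C') [0]"
    using s0_neighbour_in_type2[of C C1] \<open>v \<noteq> v'\<close> C1(2) by auto
  then show ?thesis using that[of C C'] eq \<open>v \<noteq> v'\<close> res_eq[of "{1, 2}" C' C1] by auto
qed

end

section \<open>Vertices around an edge of type \<open>(k, 2)\<close>\<close>

locale triangle_building = W_building k m \<delta> + triangle_group k m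
  for k m :: nat and \<delta> :: "'c \<Rightarrow> 'c \<Rightarrow> nat list"
begin

lemma res_01_neq_res_02: "res {0, 1} C \<noteq> res {0, 2} E"
proof
  assume eq: "res {0, 1} C = res {0, 2} E"
  obtain Y where Y: "coxeq k m (\<delta> Y C) [1]" using delta_panel_exists[of 1 C C] by auto
  have "Y \<in> res {0, 2} E" "C \<in> res {0, 2} E"
    using eq res_self[of C] mem_res_single[OF delta_swap_single[OF Y]] by auto
  then have "Y \<in> res {0, 2} C" using res_eq[of "{0, 2}" C E] by simp
  then obtain g where "set g \<subseteq> {0, 2}" "coxeq k m (\<delta> C Y) g" by (auto simp: mem_res_iff)
  then show False
    using s1_not_typem coxeq.trans[OF coxeq.sym[OF delta_swap_single[OF Y]]] by blast
qed

lemma same_type2_residue: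
  assumes vv: "res {1, 2} C \<noteq> res {1, 2} C'" and eC: "coxeq k m (\<delta> C C') [0]"
    and D: "D \<in> res {1, 2} C" and D': "D' \<in> res {1, 2} C'" and eD: "coxeq k m (\<delta> D D') [0]"
  shows "res {0, 1} D = res {0, 1} C"
proof -
  have C: "C \<in> res {1, 2} D" using res_eq_if_mem[OF _ D] by simp
  have "res {1, 2} D' \<noteq> res {1, 2} D" using vv res_eq[of "{1, 2}" D C] res_eq[of "{1, 2}" D' C'] D D'
    by simp
  from delta_through_s0_neighbour[OF this delta_swap_single[OF eD] C]
  have D'C: "coxeq k m (\<delta> D' C) (0 # \<delta> D C)" .
  have CD': "coxeq k m (\<delta> C D') (0 # \<delta> C' D')" using delta_through_s0_neighbour[OF vv eC D'] .
  obtain a where a: "set a \<subseteq> {1, 2}" "coxeq k m (\<delta> D C) a" using C by (auto simp: mem_res_iff)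
  obtain c where c: "set c \<subseteq> {1, 2}" "coxeq k m (\<delta> C' D') c" using D' by (auto simp: mem_res_iff)
  have "coxeq k m (0 # a) (0 # \<delta> D C)" using coxeq_Cons[OF coxeq.sym[OF a(2)]] .
  also have "coxeq k m \<dots> (\<delta> D' C)" using coxeq.sym[OF D'C] .
  also have "coxeq k m \<dots> (rev (\<delta> C D'))" by (rule delta_swap)
  also have "coxeq k m \<dots> (rev (0 # c))" using coxeq_rev[OF coxeq.trans[OF CD' coxeq_Cons[OF c(2)]]] .
  finally have "coxeq k m ((0 # a) @ [0]) ((rev c @ [0]) @ [0])" using coxeq_snoc by fastforce
  also have "coxeq k m ((rev c @ [0]) @ [0]) (rev c)"
    using coxeq_cancel_square[of 0 k m "rev c" "[]"] by simp
  finally have "coxeq k m (0 # a @ [0]) (rev c)" by simp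
  with a(1) c(1) have "coxeq k m a [] \<or> coxeq k m a [1]"
    by (intro typek_conj_s0_typek[of a "rev c"]) auto
  then have "C \<in> res {0, 1} D"
    using mem_resI[of "[]" "{0, 1}" D C] mem_res_single[of D C 1 "{0, 1}"] coxeq.trans[OF a(2)] by auto
  then show ?thesis using res_eq by simp
qed

lemma type2_meets_typem:
  assumes vv: "res {1, 2} C \<noteq> res {1, 2} C'" and eC: "coxeq k m (\<delta> C C') [0]"
    and E: "E \<in> res {1, 2} C" and E': "E' \<in> res {1, 2} C'" "E' \<in> res {0, 2} E"
  shows "res {0, 1} C \<inter> res {0, 2} E \<noteq> {}"
proof -
  obtain a where a: "set a \<subseteq> {1, 2}" "coxeq k m (\<delta> C E) a" using E by (auto simp: mem_res_iff)
  obtain c where c: "set c \<subseteq> {1, 2}" "coxeq k m (\<delta> C' E') c" using E'(1) by (auto simp: mem_res_iff)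
  obtain h where h: "set h \<subseteq> {0, 2}" "coxeq k m (\<delta> E E') h" using E'(2) by (auto simp: mem_res_iff)
  obtain t where t: "set t \<subseteq> {0, 2}" "coxeq k m (\<delta> C E') (\<delta> C E @ t)"
    using delta_append_residue[OF h(1) _ h(2), of C] by auto
  have "coxeq k m (0 # c) (0 # \<delta> C' E')" using coxeq_Cons[OF coxeq.sym[OF c(2)]] .
  also have "coxeq k m \<dots> (\<delta> C E')" using coxeq.sym[OF delta_through_s0_neighbour[OF vv eC E'(1)]] .
  also have "coxeq k m \<dots> (\<delta> C E @ t)" using t(2) .
  also have "coxeq k m \<dots> (a @ t)" using coxeq_append[OF a(2) coxeq.refl] .
  finally have "coxeq k m (0 # c) (a @ t)" .
  from typek_s0_typek_typem[OF a(1) c(1) t(1) this]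
  show ?thesis using res_01_meets_res_02[OF a(2)] by blast
qed

lemma type2_neighbour_unique:
  assumes "vertex_of_type k m \<delta> typek v" "vertex_of_type k m \<delta> typek v'" "v \<noteq> v'"
    and "vertex_of_type k m \<delta> type2 w" "adjacent v w" "adjacent v' w"
    and "vertex_of_type k m \<delta> type2 w'" "adjacent v w'" "adjacent v' w'"
  shows "w' = w"
proof -
  obtain C C' where C: "v = res {1, 2} C" "v' = res {1, 2} C'" "w = res {0, 1} C"
    "res {1, 2} C \<noteq> res {1, 2} C'" "coxeq k m (\<delta> C C') [0]"
    using edge_typek_type2_chambers[OF assms(1-6)] .
  obtain D D' where D: "v = res {1, 2} D" "v' = res {1, 2} D'" "w' = res {0, 1} D"
    "coxeq k m (\<delta> D D') [0]"
    using edge_typek_type2_chambers[OF assms(1-3,7-9)] .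
  have "D \<in> res {1, 2} C" "D' \<in> res {1, 2} C'" using C D res_self by metis+
  then show ?thesis using same_type2_residue[OF C(4,5)] C D by simp
qed

lemma type2_adjacent_typem:
  assumes "vertex_of_type k m \<delta> typek v" "vertex_of_type k m \<delta> typek v'" "v \<noteq> v'"
    and "vertex_of_type k m \<delta> type2 w" "adjacent v w" "adjacent v' w"
    and u: "vertex_of_type k m \<delta> typem u" "adjacent v u" "adjacent v' u"
  shows "adjacent w u"
proof -
  obtain C C' where C: "v = res {1, 2} C" "v' = res {1, 2} C'" "w = res {0, 1} C"
    "res {1, 2} C \<noteq> res {1, 2} C'" "coxeq k m (\<delta> C C') [0]"
    using edge_typek_type2_chambers[OF assms(1-6)] .
  obtain E E' where E: "E \<in> v" "E \<in> u" "E' \<in> v'" "E' \<in> u"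
    using u(2,3) unfolding adjacent_def by blast
  have "u = res {0, 2} E" using vertex_eq_res[OF u(1) _ E(2)] by simp
  then have "res {0, 1} C \<inter> u \<noteq> {}" using type2_meets_typem[OF C(4,5)] C E by simp
  then show ?thesis using res_01_neq_res_02 C(3) \<open>u = res {0, 2} E\<close> by (simp add: adjacent_def)
qed

end

theorem corollary5p4:
  fixes \<delta> :: "'c \<Rightarrow> 'c \<Rightarrow> nat list" and k m :: nat and v v' w :: "'c set"
  assumes "building k m \<delta>" and "k \<ge> 3" and "m \<ge> 6"
    and "vertex_of_type k m \<delta> typek v" and "vertex_of_type k m \<delta> typek v'" and "v \<noteq> v'"
    and "vertex_of_type k m \<delta> type2 w"
    and "adjacent v w" and "adjacent v' w"
  shows "(\<forall>w'. vertex_of_type k m \<delta> type2 w' \<and> adjacent v w' \<and> adjacent v' w' \<longrightarrow> w' = w)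
       \<and> (\<forall>u. vertex_of_type k m \<delta> typem u \<and> adjacent v u \<and> adjacent v' u \<longrightarrow> adjacent w u)"
proof -
  interpret triangle_building k m \<delta>
    using assms(1-3) by unfold_locales auto
  show ?thesis
    using type2_neighbour_unique[OF assms(4-9)] type2_adjacent_typem[OF assms(4-9)] by blast
qed

end
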